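(* Complete semantics is serialisable with the selection function $\alpha_{adm}(X,Y,Z)=X\cup Y\cup Z$ and the termination function $\beta_{co}(F,S)=1$ if $\mathrm{IS}^u(F)=\emptyset$ and $\beta_{co}(F,S)=0$ otherwise.
   Context: An abstract argumentation framework (AF) is a pair $F=(A,R)$ with $A$ a finite subset of a fixed universal set of arguments $\mathfrak{A}$ and $R\subseteq A\times A$ ($a\to b$ means $(a,b)\in R$). For $S\subseteq A$: $S^+=\{a\mid \exists b\in S: b\to a\}$, $S^-=\{a\mid\exists b\in S: a\to b\}$; for sets $S,S'$, $S\to S'$ means $S^+\cap S'\neq\emptyset$. $S$ is conflict-free if no $a,b\in S$ with $a\to b$; $S$ defends $b$ if every attacker of $b$ is attacked by some element of $S$; $S$ is admissible if conflict-free and defends all its elements. A complete extension is an admissible set $E$ containing every argument it defends. An initial set is a non-empty admissible set with no non-empty admissible proper subset; $\mathrm{IS}(F)$ is the set of initial sets. An initial set $S$ is unattacked if $S^-=\emptyset$; unchallenged if $S^-\neq\emptyset$ and no $S'\in\mathrm{IS}(F)$ has $S'\to S$; challenged if some $S'\in\mathrm{IS}(F)$ has $S'\to S$. Write $\mathrm{IS}^{u}(F),\mathrm{IS}^{uc}(F),\mathrm{IS}^{c}(F)$ for these sets. The reduct is $F^S=(A',R\cap(A'\times A'))$ with $A'=A\setminus(S\cup S^+)$. A selection function $\alpha$ maps any three sets $X,Y,Z$ of sets of arguments to a subset of $X\cup Y\cup Z$; a termination function $\beta$ maps pairs $(F,S)$ to $\{0,1\}$. Transitions: $(F,S)\to(F^{S'},S\cup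 S')$ whenever $S'\in\alpha(\mathrm{IS}^u(F),\mathrm{IS}^{uc}(F),\mathrm{IS}^c(F))$. $(F,S)\leadsto^{\alpha,\beta}(F',S')$ means $(F',S')$ is reachable from $(F,S)$ in finitely many (possibly zero) transitions and $\beta(F',S')=1$. $\mathcal{E}^{\alpha,\beta}(F)$ is the set of all $S$ with $(F,\emptyset)\leadsto^{\alpha,\beta}(F',S)$ for some $F'$. A semantics $\sigma$ is serialisable with $\alpha,\beta$ if $\sigma(F)=\mathcal{E}^{\alpha,\beta}(F)$ for all AFs $F$. *)

theory Defs
  imports Main
begin

text \<open>An AF over the universal set of arguments (the type 'a) is a pair (A, R).\<close>
type_synonym 'a af = "'a set \<times> ('a \<times> 'a) set"

definition is_AF :: "'a af \<Rightarrow> bool" where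
  "is_AF F \<longleftrightarrow> finite (fst F) \<and> snd F \<subseteq> fst F \<times> fst F"

definition plus_set :: "('a \<times> 'a) set \<Rightarrow> 'a set \<Rightarrow> 'a set" where
  "plus_set R S = {a. \<exists>b\<in>S. (b, a) \<in> R}"

definition minus_set :: "('a \<times> 'a) set \<Rightarrow> 'a set \<Rightarrow> 'a set" where
  "minus_set R S = {a. \<exists>b\<in>S. (a, b) \<in> R}"

definition set_attacks :: "('a \<times> 'a) set \<Rightarrow> 'a set \<Rightarrow> 'a set \<Rightarrow> bool" where
  "set_attacks R S S' \<longleftrightarrow> plus_set R S \<inter> S' \<noteq> {}"

definition conflict_free :: "'a af \<Rightarrow> 'a set \<Rightarrow> bool" where
  "conflict_free F S \<longleftrightarrow> (\<forall>a\<in>S. \<forall>b\<in>S. (a, b) \<notin> snd F)"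

definition defends :: "'a af \<Rightarrow> 'a set \<Rightarrow> 'a \<Rightarrow> bool" where
  "defends F S b \<longleftrightarrow> (\<forall>c. (c, b) \<in> snd F \<longrightarrow> (\<exists>d\<in>S. (d, c) \<in> snd F))"

definition admissible :: "'a af \<Rightarrow> 'a set \<Rightarrow> bool" where
  "admissible F S \<longleftrightarrow> S \<subseteq> fst F \<and> conflict_free F S \<and> (\<forall>b\<in>S. defends F S b)"

definition complete_ext :: "'a af \<Rightarrow> 'a set \<Rightarrow> bool" where
  "complete_ext F E \<longleftrightarrow> admissible F E \<and> (\<forall>b\<in>fst F. defends F E b \<longrightarrow> b \<in> E)"

definition complete_sem :: "'a af \<Rightarrow> 'a set set" where
  "complete_sem F = {E. complete_ext F E}"

definition initial_set :: "'a af \<Rightarrow> 'a set \<Rightarrow> bool" where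
  "initial_set F S \<longleftrightarrow> S \<noteq> {} \<and> admissible F S \<and>
     \<not> (\<exists>S'. S' \<noteq> {} \<and> S' \<subset> S \<and> admissible F S')"

definition IS :: "'a af \<Rightarrow> 'a set set" where
  "IS F = {S. initial_set F S}"

definition IS_u :: "'a af \<Rightarrow> 'a set set" where
  "IS_u F = {S \<in> IS F. minus_set (snd F) S = {}}"

definition IS_uc :: "'a af \<Rightarrow> 'a set set" where
  "IS_uc F = {S \<in> IS F. minus_set (snd F) S \<noteq> {} \<and>
                 \<not> (\<exists>S'\<in>IS F. set_attacks (snd F) S' S)}"

definition IS_c :: "'a af \<Rightarrow> 'a set set" where
  "IS_c F = {S \<in> IS F. \<exists>S'\<in>IS F. set_attacks (snd F) S' S}"

definition reduct :: "'a af \<Rightarrow> 'a set \<Rightarrow> 'a af" where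
  "reduct F S = (let A' = fst F - (S \<union> plus_set (snd F) S)
                 in (A', snd F \<inter> (A' \<times> A')))"

text \<open>Selection functions map three sets of argument sets to a subset of their union;
  termination functions map (F, S) to {0,1}, represented here as bool (1 = True).\<close>
type_synonym 'a selection = "'a set set \<Rightarrow> 'a set set \<Rightarrow> 'a set set \<Rightarrow> 'a set set"
type_synonym 'a term_fun = "'a af \<Rightarrow> 'a set \<Rightarrow> bool"

inductive trans_step :: "'a selection \<Rightarrow> 'a af \<times> 'a set \<Rightarrow> 'a af \<times> 'a set \<Rightarrow> bool"
  for \<alpha> :: "'a selection" where
  "S' \<in> \<alpha> (IS_u F) (IS_uc F) (IS_c F) \<Longrightarrow>
     trans_step \<alpha> (F, S) (reduct F S', S \<union> S')"

definition leadsto :: "'a selection \<Rightarrow> 'a term_fun \<Rightarrow> 'a af \<times> 'a set \<Rightarrow> 'a af \<times> 'a set \<Rightarrow> bool" where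
  "leadsto \<alpha> \<beta> c c' \<longleftrightarrow> (trans_step \<alpha>)\<^sup>*\<^sup>* c c' \<and> \<beta> (fst c') (snd c')"

definition serial_ext :: "'a selection \<Rightarrow> 'a term_fun \<Rightarrow> 'a af \<Rightarrow> 'a set set" where
  "serial_ext \<alpha> \<beta> F = {S. \<exists>F'. leadsto \<alpha> \<beta> (F, {}) (F', S)}"

definition serialisable :: "('a af \<Rightarrow> 'a set set) \<Rightarrow> 'a selection \<Rightarrow> 'a term_fun \<Rightarrow> bool" where
  "serialisable \<sigma> \<alpha> \<beta> \<longleftrightarrow> (\<forall>F. is_AF F \<longrightarrow> \<sigma> F = serial_ext \<alpha> \<beta> F)"

definition alpha_adm :: "'a selection" where
  "alpha_adm X Y Z = X \<union> Y \<union> Z"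

definition beta_co :: "'a term_fun" where
  "beta_co F S \<longleftrightarrow> IS_u F = {}"

end

theory Submission
  imports Defs
begin

(* Every state reachable from (F, {}) has the form (F^S, S) with S admissible in F,
   since the union of an admissible set S of F with an admissible set of the reduct F^S is
   admissible in F. Conversely, every admissible E is reached: E - S is admissible in F^S, so
   it contains an initial set of F^S, and adding it is a transition that brings S closer to E.
   The termination test then singles out the complete extensions: for admissible E, an
   argument outside E is defended by E exactly when it is unattacked in F^E, that is, when it
   forms an unattacked initial set of F^E. *)

lemma fst_reduct: "fst (reduct F S) = fst F - (S \<union> plus_set (snd F) S)"
  unfolding reduct_def Let_def by simp

lemma snd_reduct: "snd (reduct F S) = snd F \<inter> (fst (reduct F S) \<times> fst (reduct F S))"
  unfolding reduct_def Let_def by simp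

lemma reduct_empty:
  assumes "is_AF F"
  shows "reduct F {} = F"
  using assms unfolding reduct_def is_AF_def plus_set_def Let_def by (cases F) auto

lemma plus_set_snd_reduct:
  assumes "S' \<subseteq> fst (reduct F S)"
  shows "plus_set (snd (reduct F S)) S' = plus_set (snd F) S' \<inter> fst (reduct F S)"
  using assms unfolding snd_reduct[of F S] plus_set_def by blast

lemma reduct_reduct:
  assumes "S' \<subseteq> fst (reduct F S)"
  shows "reduct (reduct F S) S' = reduct F (S \<union> S')"
proof (rule prod_eqI)
  have "plus_set (snd F) (S \<union> S') = plus_set (snd F) S \<union> plus_set (snd F) S'"
    unfolding plus_set_def by blast
  then show fst_eq: "fst (reduct (reduct F S) S') = fst (reduct F (S \<union> S'))"
    using assms unfolding fst_reduct[of "reduct F S"] plus_set_snd_reduct[OF assms]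
    by (auto simp: fst_reduct)
  have "fst (reduct (reduct F S) S') \<subseteq> fst (reduct F S)"
    by (simp add: fst_reduct[of "reduct F S"])
  then show "snd (reduct (reduct F S) S') = snd (reduct F (S \<union> S'))"
    by (subst (1 2) snd_reduct) (auto simp: fst_eq snd_reduct[of F S])
qed

lemma alpha_adm_IS: "alpha_adm (IS_u F) (IS_uc F) (IS_c F) = IS F"
  unfolding alpha_adm_def IS_u_def IS_uc_def IS_c_def by blast

lemma trans_step_alpha_adm_iff:
  "trans_step alpha_adm (G, S) (G', S') \<longleftrightarrow> (\<exists>T\<in>IS G. G' = reduct G T \<and> S' = S \<union> T)"
proof
  assume "trans_step alpha_adm (G, S) (G', S')"
  then show "\<exists>T\<in>IS G. G' = reduct G T \<and> S' = S \<union> T"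
    by (cases rule: trans_step.cases) (auto simp: alpha_adm_IS)
next
  assume "\<exists>T\<in>IS G. G' = reduct G T \<and> S' = S \<union> T"
  then show "trans_step alpha_adm (G, S) (G', S')"
    by (auto simp: alpha_adm_IS intro: trans_step.intros)
qed

lemma admissible_empty: "admissible F {}"
  unfolding admissible_def conflict_free_def by simp

lemma admissible_Un_reduct:
  assumes AF: "is_AF F" and S: "admissible F S" and S': "admissible (reduct F S) S'"
  shows "admissible F (S \<union> S')"
proof -
  have S'_sub: "S' \<subseteq> fst (reduct F S)"
    using S' unfolding admissible_def by simp
  then have no_attack: "(x, y) \<notin> snd F" if "x \<in> S" "y \<in> S'" for x y
    using that unfolding fst_reduct plus_set_def by blast
  have cf_S: "(x, y) \<notin> snd F" if "x \<in> S" "y \<in> S" for x y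
    using S that unfolding admissible_def conflict_free_def by blast
  have cf_S': "(x, y) \<notin> snd F" if "x \<in> S'" "y \<in> S'" for x y
    using S' S'_sub that unfolding admissible_def conflict_free_def snd_reduct[of F S] by blast
  have def_S: "\<exists>d\<in>S. (d, c) \<in> snd F" if "y \<in> S" "(c, y) \<in> snd F" for y c
    using S that unfolding admissible_def defends_def by blast
  have def_S': "\<exists>d\<in>S'. (d, c) \<in> snd F" if "y \<in> S'" "(c, y) \<in> snd F" "c \<in> fst (reduct F S)" for y c
    using S' S'_sub that unfolding admissible_def defends_def snd_reduct[of F S] by blast
  have "conflict_free F (S \<union> S')"
    unfolding conflict_free_def using cf_S cf_S' no_attack def_S by blast
  moreover have "defends F (S \<union> S') b" if b: "b \<in> S \<union> S'" for b
    unfolding defends_def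
  proof (intro allI impI)
    fix c assume cb: "(c, b) \<in> snd F"
    then have "c \<in> fst F" using AF unfolding is_AF_def by blast
    then show "\<exists>d\<in>S \<union> S'. (d, c) \<in> snd F"
      using b cb def_S def_S' no_attack unfolding fst_reduct plus_set_def by blast
  qed
  moreover have "S \<union> S' \<subseteq> fst F"
    using S S'_sub unfolding admissible_def fst_reduct by blast
  ultimately show ?thesis unfolding admissible_def by blast
qed

lemma admissible_Diff_reduct:
  assumes E: "admissible F E" and "S \<subseteq> E"
  shows "admissible (reduct F S) (E - S)"
proof -
  have cf_E: "(x, y) \<notin> snd F" if "x \<in> E" "y \<in> E" for x y
    using E that unfolding admissible_def conflict_free_def by blast
  have def_E: "\<exists>d\<in>E. (d, c) \<in> snd F" if "y \<in> E" "(c, y) \<in> snd F" for y c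
    using E that unfolding admissible_def defends_def by blast
  have sub: "E - S \<subseteq> fst (reduct F S)"
    using E \<open>S \<subseteq> E\<close> cf_E unfolding admissible_def fst_reduct plus_set_def by blast
  moreover have "conflict_free (reduct F S) (E - S)"
    using cf_E unfolding conflict_free_def snd_reduct[of F S] by blast
  moreover have "defends (reduct F S) (E - S) b" if "b \<in> E - S" for b
    using that sub def_E unfolding defends_def snd_reduct[of F S] fst_reduct plus_set_def by blast
  ultimately show ?thesis unfolding admissible_def by blast
qed

lemma admissible_contains_initial_set:
  assumes "finite X" "X \<noteq> {}" "admissible F X"
  shows "\<exists>T\<subseteq>X. initial_set F T"
  using assms
proof (induction X rule: finite_psubset_induct)
  case (psubset X)
  show ?case
  proof (cases "initial_set F X")
    case True
    then show ?thesis by blast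
  next
    case False
    then obtain S where S: "S \<noteq> {}" "S \<subset> X" "admissible F S"
      using psubset.prems unfolding initial_set_def by blast
    then obtain T where "T \<subseteq> S" "initial_set F T"
      using psubset.IH[OF S(2)] psubset.hyps finite_subset by blast
    with \<open>S \<subset> X\<close> show ?thesis by blast
  qed
qed

lemma unattacked_singleton_in_IS_u:
  assumes "b \<in> fst G" "\<And>c. (c, b) \<notin> snd G"
  shows "{b} \<in> IS_u G"
proof -
  have "admissible G {b}"
    using assms unfolding admissible_def conflict_free_def defends_def by blast
  then show ?thesis
    using assms unfolding IS_u_def IS_def initial_set_def minus_set_def by blast
qed

lemma IS_u_unattacked:
  assumes "T \<in> IS_u G" "t \<in> T"
  shows "t \<in> fst G" "(c, t) \<notin> snd G"
  using assms unfolding IS_u_def IS_def initial_set_def admissible_def minus_set_def by blast+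

lemma defends_iff_unattacked_in_reduct:
  assumes AF: "is_AF F" and cf: "conflict_free F E" and b: "b \<in> fst F" "b \<notin> E"
  shows "defends F E b \<longleftrightarrow> b \<in> fst (reduct F E) \<and> (\<forall>c. (c, b) \<notin> snd (reduct F E))"
proof
  assume "defends F E b"
  then show "b \<in> fst (reduct F E) \<and> (\<forall>c. (c, b) \<notin> snd (reduct F E))"
    using cf b unfolding defends_def conflict_free_def snd_reduct[of F E] fst_reduct plus_set_def
    by blast
next
  assume unattacked: "b \<in> fst (reduct F E) \<and> (\<forall>c. (c, b) \<notin> snd (reduct F E))"
  have "c \<in> fst F" if "(c, b) \<in> snd F" for c
    using AF that unfolding is_AF_def by blast
  then show "defends F E b"
    using unattacked unfolding defends_def snd_reduct[of F E] fst_reduct plus_set_def by blast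
qed

lemma complete_ext_iff_IS_u_reduct_empty:
  assumes AF: "is_AF F" and E: "admissible F E"
  shows "complete_ext F E \<longleftrightarrow> IS_u (reduct F E) = {}"
proof -
  have cf: "conflict_free F E" using E unfolding admissible_def by blast
  have "(\<forall>b\<in>fst F. defends F E b \<longrightarrow> b \<in> E) \<longleftrightarrow> IS_u (reduct F E) = {}"
  proof
    assume closed: "\<forall>b\<in>fst F. defends F E b \<longrightarrow> b \<in> E"
    show "IS_u (reduct F E) = {}"
    proof (rule ccontr)
      assume "IS_u (reduct F E) \<noteq> {}"
      then obtain T where T: "T \<in> IS_u (reduct F E)" by blast
      then obtain t where "t \<in> T" unfolding IS_u_def IS_def initial_set_def by auto
      have t: "t \<in> fst (reduct F E)" "\<forall>c. (c, t) \<notin> snd (reduct F E)"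
        using IS_u_unattacked[OF T \<open>t \<in> T\<close>] by blast+
      then have "t \<in> fst F" "t \<notin> E" unfolding fst_reduct by blast+
      moreover from this t have "defends F E t"
        using defends_iff_unattacked_in_reduct[OF AF cf] by simp
      ultimately show False using closed by blast
    qed
  next
    assume no_IS_u: "IS_u (reduct F E) = {}"
    show "\<forall>b\<in>fst F. defends F E b \<longrightarrow> b \<in> E"
    proof (intro ballI impI)
      fix b assume b: "b \<in> fst F" "defends F E b"
      show "b \<in> E"
      proof (rule ccontr)
        assume "b \<notin> E"
        with b have "b \<in> fst (reduct F E)" "\<And>c. (c, b) \<notin> snd (reduct F E)"
          using defends_iff_unattacked_in_reduct[OF AF cf] by simp_all
        then have "{b} \<in> IS_u (reduct F E)" by (rule unattacked_singleton_in_IS_u)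
        with no_IS_u show False by simp
      qed
    qed
  qed
  then show ?thesis using E unfolding complete_ext_def by blast
qed

lemma reachable_admissible:
  assumes "(trans_step alpha_adm)\<^sup>*\<^sup>* (F, {}) (G, S)" and AF: "is_AF F"
  shows "admissible F S \<and> G = reduct F S"
  using assms(1)
proof (induction "(G, S)" arbitrary: G S rule: rtranclp_induct)
  case base
  show ?case using admissible_empty reduct_empty[OF AF] by simp
next
  case (step C G S)
  obtain G0 S0 where C: "C = (G0, S0)" by (cases C)
  with step.hyps(3) have S0: "admissible F S0" and G0: "G0 = reduct F S0" by simp_all
  from step.hyps(2) obtain T where T: "T \<in> IS G0" "G = reduct G0 T" "S = S0 \<union> T"
    unfolding C trans_step_alpha_adm_iff by blast
  then have "admissible G0 T" "T \<subseteq> fst G0"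
    unfolding IS_def initial_set_def admissible_def by blast+
  with S0 G0 T show ?case using admissible_Un_reduct[OF AF] reduct_reduct by metis
qed

lemma reaches_admissible_superset:
  assumes AF: "is_AF F" and E: "admissible F E"
  shows "admissible F S \<Longrightarrow> S \<subseteq> E \<Longrightarrow>
    (trans_step alpha_adm)\<^sup>*\<^sup>* (reduct F S, S) (reduct F E, E)"
proof (induction "card (E - S)" arbitrary: S rule: less_induct)
  case less
  show ?case
  proof (cases "S = E")
    case True
    then show ?thesis by simp
  next
    case False
    have "finite E"
      using AF E finite_subset unfolding is_AF_def admissible_def by blast
    moreover have "E - S \<noteq> {}" using False less.prems(2) by blast
    ultimately obtain T where T: "T \<subseteq> E - S" "initial_set (reduct F S) T"
      using admissible_contains_initial_set admissible_Diff_reduct[OF E less.prems(2)] by blast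
    then have T_adm: "admissible (reduct F S) T" and T_sub: "T \<subseteq> fst (reduct F S)" and "T \<noteq> {}"
      unfolding initial_set_def admissible_def by blast+
    have "trans_step alpha_adm (reduct F S, S) (reduct F (S \<union> T), S \<union> T)"
      using T(2) reduct_reduct[OF T_sub] unfolding trans_step_alpha_adm_iff IS_def
      by (auto intro!: bexI[of _ T])
    moreover have "card (E - (S \<union> T)) < card (E - S)"
      using \<open>finite E\<close> T(1) \<open>T \<noteq> {}\<close> by (intro psubset_card_mono) auto
    then have "(trans_step alpha_adm)\<^sup>*\<^sup>* (reduct F (S \<union> T), S \<union> T) (reduct F E, E)"
      using less.hyps admissible_Un_reduct[OF AF less.prems(1) T_adm] T(1) less.prems(2)
      by blast
    ultimately show ?thesis by (rule converse_rtranclp_into_rtranclp)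
  qed
qed

lemma complete_sem_eq:
  assumes "is_AF F"
  shows "complete_sem F = {E. admissible F E \<and> IS_u (reduct F E) = {}}"
  using complete_ext_iff_IS_u_reduct_empty[OF assms]
  unfolding complete_sem_def complete_ext_def by blast

lemma serial_ext_beta_co:
  "serial_ext \<alpha> beta_co F = {S. \<exists>G. (trans_step \<alpha>)\<^sup>*\<^sup>* (F, {}) (G, S) \<and> IS_u G = {}}"
  unfolding serial_ext_def leadsto_def beta_co_def by simp

lemma serial_ext_alpha_adm_beta_co_eq:
  assumes AF: "is_AF F"
  shows "serial_ext alpha_adm beta_co F = {E. admissible F E \<and> IS_u (reduct F E) = {}}"
proof (intro set_eqI iffI)
  fix E assume "E \<in> serial_ext alpha_adm beta_co F"
  then obtain G where "(trans_step alpha_adm)\<^sup>*\<^sup>* (F, {}) (G, E)" "IS_u G = {}"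
    unfolding serial_ext_beta_co by blast
  then show "E \<in> {E. admissible F E \<and> IS_u (reduct F E) = {}}"
    using reachable_admissible[OF _ AF] by blast
next
  fix E assume E: "E \<in> {E. admissible F E \<and> IS_u (reduct F E) = {}}"
  then have "(trans_step alpha_adm)\<^sup>*\<^sup>* (F, {}) (reduct F E, E)"
    using reaches_admissible_superset[OF AF _ admissible_empty] reduct_empty[OF AF] by simp
  with E show "E \<in> serial_ext alpha_adm beta_co F"
    unfolding serial_ext_beta_co by blast
qed

theorem theorem3:
  shows "serialisable (complete_sem :: 'a af \<Rightarrow> 'a set set) alpha_adm beta_co"
  unfolding serialisable_def
  using complete_sem_eq serial_ext_alpha_adm_beta_co_eq by metis

end
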